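(* Let $A$ be a circular $m\times n$ matrix and let $\Gamma$ be a closed directed path (not necessarily simple) in $D(A)$. Then for every $j\in[n]$, $$p^+(\Gamma,j)-p^-(\Gamma,j)=p(\Gamma).$$
   Context: Notation: $[n]=\{1,\dots,n\}$ with addition mod $n$ (index $0$ identified with $n$); for $a,c\in[n]$ with $t\ge0$ minimal such that $a+t\equiv c\pmod n$, $[a,c)_n=\{a,\dots,a+t-1\}$ (mod $n$). An $m\times n$ $\{0,1\}$-matrix $A$ is circular if for each row $i$ there are $\ell_i\in[n]$ and an integer $2\le k_i\le n-1$ with row $i$ the incidence vector of $[\ell_i,\ell_i+k_i)_n$. $D(A)$: node set $[n]$ (labels mod $n$); forward row arcs $a_i=(\ell_i-1,\ell_i+k_i-1)$ ($i\in[m]$), forward short arcs $a_{m+j}=(j-1,j)$ ($j\in[n]$), reverse row arcs $\bar a_i=(\ell_i+k_i-1,\ell_i-1)$, reverse short arcs $\bar a_{m+j}=(j,j-1)$; lengths $l(a_i)=k_i$, $l(a_{m+j})=1$, $l(\bar a_i)=-k_i$, $l(\bar a_{m+j})=-1$. The winding number of a closed directed path $\Gamma$ is the integer $p(\Gamma)$ with $p(\Gamma)n=\sum_{a\in E(\Gamma)}l(a)$ (arcs counted with multiplicity). A forward row arc $a_i$ jumps over node $j$ iff $j\in[\ell_i,\ell_i+k_i)_n$; the forward short arc $(j-1,j)$ jumps over $j$ only; a reverse arc $\bar a_k$ jumps over $j$ iff $a_k$ does. $p^+(\Gamma,j)$ (resp. $p^-(\Gamma,j)$) is the number of forward (resp.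 reverse) arcs of $\Gamma$, counted with multiplicity, that jump over $j$. *)

theory Defs
  imports Main
begin

text \<open>Nodes of D(A) are the elements of [n] = {1..n}; integer labels are read mod n,
  with label 0 identified with n.\<close>
definition nd :: "nat \<Rightarrow> int \<Rightarrow> nat" where
  "nd n x = nat ((x - 1) mod int n + 1)"

definition circ_interval :: "nat \<Rightarrow> nat \<Rightarrow> nat \<Rightarrow> nat set" where
  "circ_interval n a c =
     (let t0 = (LEAST t::nat. nd n (int a + int t) = nd n (int c))
      in {nd n (int a + int t) | t. t < t0})"

definition circular_matrix ::
  "nat \<Rightarrow> nat \<Rightarrow> (nat \<Rightarrow> nat \<Rightarrow> int) \<Rightarrow> (nat \<Rightarrow> nat) \<Rightarrow> (nat \<Rightarrow> nat) \<Rightarrow> bool" where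
  "circular_matrix m n A l k \<longleftrightarrow>
     (\<forall>i\<in>{1..m}. l i \<in> {1..n} \<and> 2 \<le> k i \<and> k i \<le> n - 1 \<and>
        (\<forall>j\<in>{1..n}. A i j =
           (if j \<in> circ_interval n (l i) (nd n (int (l i) + int (k i))) then 1 else 0)))"

text \<open>Underlying (forward) arcs: row arcs a_i and short arcs a_{m+j}.
  A directed arc of D(A) is a pair (underlying arc, True) for forward, (underlying arc, False) for reverse.\<close>
datatype arc = RowArc nat | ShortArc nat

type_synonym darc = "arc \<times> bool"

fun fwd_tail :: "nat \<Rightarrow> (nat \<Rightarrow> nat) \<Rightarrow> (nat \<Rightarrow> nat) \<Rightarrow> arc \<Rightarrow> nat" where
  "fwd_tail n l k (RowArc i) = nd n (int (l i) - 1)"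
| "fwd_tail n l k (ShortArc j) = nd n (int j - 1)"

fun fwd_head :: "nat \<Rightarrow> (nat \<Rightarrow> nat) \<Rightarrow> (nat \<Rightarrow> nat) \<Rightarrow> arc \<Rightarrow> nat" where
  "fwd_head n l k (RowArc i) = nd n (int (l i) + int (k i) - 1)"
| "fwd_head n l k (ShortArc j) = nd n (int j)"

fun fwd_len :: "(nat \<Rightarrow> nat) \<Rightarrow> arc \<Rightarrow> int" where
  "fwd_len k (RowArc i) = int (k i)"
| "fwd_len k (ShortArc j) = 1"

fun fwd_jumps :: "nat \<Rightarrow> (nat \<Rightarrow> nat) \<Rightarrow> (nat \<Rightarrow> nat) \<Rightarrow> arc \<Rightarrow> nat \<Rightarrow> bool" where
  "fwd_jumps n l k (RowArc i) j = (j \<in> circ_interval n (l i) (nd n (int (l i) + int (k i))))"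
| "fwd_jumps n l k (ShortArc j') j = (j = j')"

definition arc_tail :: "nat \<Rightarrow> (nat \<Rightarrow> nat) \<Rightarrow> (nat \<Rightarrow> nat) \<Rightarrow> darc \<Rightarrow> nat" where
  "arc_tail n l k e = (if snd e then fwd_tail n l k (fst e) else fwd_head n l k (fst e))"

definition arc_head :: "nat \<Rightarrow> (nat \<Rightarrow> nat) \<Rightarrow> (nat \<Rightarrow> nat) \<Rightarrow> darc \<Rightarrow> nat" where
  "arc_head n l k e = (if snd e then fwd_head n l k (fst e) else fwd_tail n l k (fst e))"

definition arc_len :: "(nat \<Rightarrow> nat) \<Rightarrow> darc \<Rightarrow> int" where
  "arc_len k e = (if snd e then fwd_len k (fst e) else - fwd_len k (fst e))"

definition D_arcs :: "nat \<Rightarrow> nat \<Rightarrow> darc set" where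
  "D_arcs m n = {(RowArc i, d) | i d. i \<in> {1..m}} \<union> {(ShortArc j, d) | j d. j \<in> {1..n}}"

definition closed_path ::
  "nat \<Rightarrow> nat \<Rightarrow> (nat \<Rightarrow> nat) \<Rightarrow> (nat \<Rightarrow> nat) \<Rightarrow> darc list \<Rightarrow> bool" where
  "closed_path m n l k \<Gamma> \<longleftrightarrow> \<Gamma> \<noteq> [] \<and> set \<Gamma> \<subseteq> D_arcs m n \<and>
     (\<forall>i < length \<Gamma>. arc_head n l k (\<Gamma> ! i) = arc_tail n l k (\<Gamma> ! ((i + 1) mod length \<Gamma>)))"

definition total_length :: "(nat \<Rightarrow> nat) \<Rightarrow> darc list \<Rightarrow> int" where
  "total_length k \<Gamma> = sum_list (map (arc_len k) \<Gamma>)"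

definition is_winding_number :: "nat \<Rightarrow> (nat \<Rightarrow> nat) \<Rightarrow> darc list \<Rightarrow> int \<Rightarrow> bool" where
  "is_winding_number n k \<Gamma> p \<longleftrightarrow> p * int n = total_length k \<Gamma>"

definition p_plus :: "nat \<Rightarrow> (nat \<Rightarrow> nat) \<Rightarrow> (nat \<Rightarrow> nat) \<Rightarrow> darc list \<Rightarrow> nat \<Rightarrow> int" where
  "p_plus n l k \<Gamma> j = int (length (filter (\<lambda>e. snd e \<and> fwd_jumps n l k (fst e) j) \<Gamma>))"

definition p_minus :: "nat \<Rightarrow> (nat \<Rightarrow> nat) \<Rightarrow> (nat \<Rightarrow> nat) \<Rightarrow> darc list \<Rightarrow> nat \<Rightarrow> int" where
  "p_minus n l k \<Gamma> j = int (length (filter (\<lambda>e. \<not> snd e \<and> fwd_jumps n l k (fst e) j) \<Gamma>))"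

end

theory Submission imports Defs begin

text \<open>Proof idea: give node x the potential x, raised by n when x < j. Going once around
  the cycle 1, ..., n, the potential increases by 1 at every step except the step from j - 1
  to j, where it drops by n - 1. Hence a forward arc of length k from u to v satisfies
  k = pot v - pot u + n [the arc jumps over j], and a reverse arc the negated identity.
  Summing over the closed path, the potential differences telescope to 0, leaving
  p(\<Gamma>) n = n (p+(\<Gamma>,j) - p-(\<Gamma>,j)).\<close>

lemma int_nd:
  assumes "0 < n" "0 \<le> x" "x \<le> 2 * int n"
  shows "int (nd n x) = (if x = 0 then int n else if x \<le> int n then x else x - int n)"
proof -
  consider "x = 0" | "1 \<le> x \<and> x \<le> int n" | "int n < x" using assms by linarith
  then show ?thesis
  proof cases
    case 1
    have "(-1) mod int n = int n - 1" using assms by (simp add: zmod_minus1)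
    then show ?thesis using 1 by (simp add: nd_def)
  next
    case 2
    then have "(x - 1) mod int n = x - 1" by (intro mod_pos_pos_trivial) auto
    then show ?thesis using 2 by (simp add: nd_def)
  next
    case 3
    then have "(x - 1 - int n) mod int n = x - 1 - int n"
      using assms by (intro mod_pos_pos_trivial) auto
    then have "(x - 1) mod int n = x - 1 - int n" by (metis mod_add_self2 diff_add_cancel)
    then show ?thesis using 3 by (simp add: nd_def)
  qed
qed

lemma nd_eq_iff:
  assumes "0 < n"
  shows "nd n x = nd n y \<longleftrightarrow> x mod int n = y mod int n"
proof -
  have "0 \<le> (x - 1) mod int n" "0 \<le> (y - 1) mod int n" using assms by simp_all
  then have "nd n x = nd n y \<longleftrightarrow> (x - 1) mod int n = (y - 1) mod int n"
    unfolding nd_def by (simp add: nat_eq_iff)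
  also have "\<dots> \<longleftrightarrow> x mod int n = y mod int n"
    by (metis diff_add_cancel mod_add_cong mod_diff_cong)
  finally show ?thesis .
qed

lemma nd_nd:
  assumes "0 < n"
  shows "nd n (int (nd n x)) = nd n x"
proof -
  have "int (nd n x) = (x - 1) mod int n + 1" unfolding nd_def using assms by simp
  then have "int (nd n x) mod int n = x mod int n" by (simp add: mod_add_left_eq)
  then show ?thesis using nd_eq_iff[OF assms] by simp
qed

lemma circ_interval_nd_add:
  assumes n: "0 < n" and "t < n"
  shows "circ_interval n a (nd n (int a + int t)) = {nd n (int a + int s) | s. s < t}"
proof -
  have "(LEAST s::nat. nd n (int a + int s) = nd n (int (nd n (int a + int t)))) = t"
  proof (rule Least_equality)
    show "nd n (int a + int t) = nd n (int (nd n (int a + int t)))" using nd_nd[OF n] by simp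
  next
    fix s assume "nd n (int a + int s) = nd n (int (nd n (int a + int t)))"
    then have "(int a + int s) mod int n = (int a + int t) mod int n"
      using nd_nd[OF n] nd_eq_iff[OF n] by simp
    then have "(int t - int s) mod int n = 0"
      by (metis mod_diff_cong diff_self add_diff_cancel_left mod_0)
    with \<open>t < n\<close> show "t \<le> s" by (cases "s < t") auto
  qed
  then show ?thesis unfolding circ_interval_def Let_def by simp
qed

lemma mem_circ_interval_nd_add_iff:
  assumes n: "0 < n" and a: "a \<in> {1..n}" and t: "t < n" and j: "j \<in> {1..n}"
  shows "j \<in> circ_interval n a (nd n (int a + int t)) \<longleftrightarrow>
         (a \<le> j \<and> j < a + t) \<or> (a \<le> j + n \<and> j + n < a + t)"
proof -
  have val: "int (nd n (int a + int s)) = (if a + s \<le> n then int a + int s else int a + int s - int n)"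
    if "s < t" for s
    using int_nd[OF n, of "int a + int s"] that a t by auto
  have "j \<in> circ_interval n a (nd n (int a + int t)) \<longleftrightarrow> (\<exists>s<t. int (nd n (int a + int s)) = int j)"
    unfolding circ_interval_nd_add[OF n t] by auto
  also have "\<dots> \<longleftrightarrow> (a \<le> j \<and> j < a + t) \<or> (a \<le> j + n \<and> j + n < a + t)"
  proof
    assume "\<exists>s<t. int (nd n (int a + int s)) = int j"
    then obtain s where "s < t" "int (nd n (int a + int s)) = int j" by blast
    then show "(a \<le> j \<and> j < a + t) \<or> (a \<le> j + n \<and> j + n < a + t)"
      using val[of s] by (auto split: if_splits)
  next
    assume "(a \<le> j \<and> j < a + t) \<or> (a \<le> j + n \<and> j + n < a + t)"
    then show "\<exists>s<t. int (nd n (int a + int s)) = int j"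
    proof
      assume "a \<le> j \<and> j < a + t"
      then show ?thesis using val[of "j - a"] j by (intro exI[of _ "j - a"]) auto
    next
      assume "a \<le> j + n \<and> j + n < a + t"
      then show ?thesis using val[of "j + n - a"] j by (intro exI[of _ "j + n - a"]) auto
    qed
  qed
  finally show ?thesis .
qed

definition cut_potential :: "nat \<Rightarrow> nat \<Rightarrow> nat \<Rightarrow> int" where
  "cut_potential n j x = int x + (if x < j then int n else 0)"

definition signed_jump :: "nat \<Rightarrow> (nat \<Rightarrow> nat) \<Rightarrow> (nat \<Rightarrow> nat) \<Rightarrow> nat \<Rightarrow> darc \<Rightarrow> int" where
  "signed_jump n l k j e = (if fwd_jumps n l k (fst e) j then if snd e then 1 else -1 else 0)"

lemma fwd_len_row_arc:
  assumes n: "0 < n" and j: "j \<in> {1..n}" and l: "l i \<in> {1..n}" and k: "0 < k i" "k i < n"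
  shows "fwd_len k (RowArc i) =
           cut_potential n j (fwd_head n l k (RowArc i)) - cut_potential n j (fwd_tail n l k (RowArc i))
           + (if fwd_jumps n l k (RowArc i) j then int n else 0)"
proof -
  have "int (nd n (int (l i) - 1)) = (if l i = 1 then int n else int (l i) - 1)"
    using int_nd[OF n, of "int (l i) - 1"] l by auto
  then have tail: "cut_potential n j (fwd_tail n l k (RowArc i)) =
      int (l i) - 1 + (if l i \<le> j then int n else 0)"
    using j unfolding cut_potential_def by auto
  have "int (nd n (int (l i) + int (k i) - 1)) =
      (if l i + k i - 1 \<le> n then int (l i) + int (k i) - 1 else int (l i) + int (k i) - 1 - int n)"
    using int_nd[OF n, of "int (l i) + int (k i) - 1"] l k by auto
  then have head: "cut_potential n j (fwd_head n l k (RowArc i)) =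
      int (l i) + int (k i) - 1 + (if l i + k i \<le> j then int n else 0) - (if j + n < l i + k i then int n else 0)"
    using j l k unfolding cut_potential_def by (auto split: if_splits)
  have "fwd_jumps n l k (RowArc i) j \<longleftrightarrow>
      (l i \<le> j \<and> j < l i + k i) \<or> (l i \<le> j + n \<and> j + n < l i + k i)"
    using mem_circ_interval_nd_add_iff[OF n l k(2) j] by simp
  then show ?thesis using tail head l k j by auto
qed

lemma fwd_len_short_arc:
  assumes n: "0 < n" and j: "j \<in> {1..n}" and j': "j' \<in> {1..n}"
  shows "fwd_len k (ShortArc j') =
           cut_potential n j (fwd_head n l k (ShortArc j')) - cut_potential n j (fwd_tail n l k (ShortArc j'))
           + (if fwd_jumps n l k (ShortArc j') j then int n else 0)"
proof -
  have "int (nd n (int j' - 1)) = (if j' = 1 then int n else int j' - 1)"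
    using int_nd[OF n, of "int j' - 1"] j' by auto
  moreover have "int (nd n (int j')) = int j'"
    using int_nd[OF n, of "int j'"] j' by auto
  ultimately show ?thesis using j j' unfolding cut_potential_def by (auto split: if_splits)
qed

lemma arc_len_cut_potential:
  assumes A: "circular_matrix m n A l k" and e: "e \<in> D_arcs m n" and j: "j \<in> {1..n}"
  shows "arc_len k e = cut_potential n j (arc_head n l k e) - cut_potential n j (arc_tail n l k e)
           + int n * signed_jump n l k j e"
proof -
  have n: "0 < n" using j by simp
  have fwd: "fwd_len k (fst e) =
      cut_potential n j (fwd_head n l k (fst e)) - cut_potential n j (fwd_tail n l k (fst e))
      + (if fwd_jumps n l k (fst e) j then int n else 0)"
  proof (cases "fst e")
    case (RowArc i)
    then have "i \<in> {1..m}" using e unfolding D_arcs_def by (cases e) auto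
    then have "l i \<in> {1..n}" "0 < k i" "k i < n" using A unfolding circular_matrix_def by fastforce+
    then show ?thesis using RowArc fwd_len_row_arc[OF n j] by simp
  next
    case (ShortArc j')
    then have "j' \<in> {1..n}" using e unfolding D_arcs_def by (cases e) auto
    then show ?thesis using ShortArc fwd_len_short_arc[OF n j] by simp
  qed
  show ?thesis
    using fwd unfolding arc_len_def arc_head_def arc_tail_def signed_jump_def by auto
qed

lemma sum_rotate_mod:
  fixes L :: nat
  assumes "0 < L"
  shows "(\<Sum>i<L. g ((i + 1) mod L)) = (\<Sum>i<L. g i :: 'a::comm_monoid_add)"
proof -
  obtain M where M: "L = Suc M" using assms by (cases L) auto
  have "(\<Sum>i<Suc M. g ((i + 1) mod Suc M)) = (\<Sum>i<M. g ((i + 1) mod Suc M)) + g 0"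
    by simp
  also have "(\<Sum>i<M. g ((i + 1) mod Suc M)) = (\<Sum>i<M. g (Suc i))"
    by (rule sum.cong) auto
  also have "\<dots> + g 0 = (\<Sum>i<Suc M. g i)"
    by (subst sum.lessThan_Suc_shift) (simp add: add.commute)
  finally show ?thesis using M by simp
qed

lemma sum_list_cyclic_telescope:
  fixes f :: "'b \<Rightarrow> 'c::ab_group_add"
  assumes "xs \<noteq> []"
    and chain: "\<And>i. i < length xs \<Longrightarrow> hd_of (xs ! i) = tl_of (xs ! ((i + 1) mod length xs))"
  shows "(\<Sum>x\<leftarrow>xs. f (hd_of x) - f (tl_of x)) = 0"
proof -
  let ?L = "length xs"
  have "(\<Sum>i<?L. f (hd_of (xs ! i))) = (\<Sum>i<?L. f (tl_of (xs ! ((i + 1) mod ?L))))"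
    using chain by simp
  also have "\<dots> = (\<Sum>i<?L. f (tl_of (xs ! i)))"
    using assms(1) by (intro sum_rotate_mod) simp
  finally show ?thesis
    by (simp add: sum_list_sum_nth atLeast0LessThan sum_subtractf)
qed

lemma p_plus_minus_signed_jump:
  "p_plus n l k \<Gamma> j - p_minus n l k \<Gamma> j = (\<Sum>e\<leftarrow>\<Gamma>. signed_jump n l k j e)"
  unfolding p_plus_def p_minus_def signed_jump_def
  by (induction \<Gamma>) auto

theorem lemma4p1:
  fixes m n :: nat and A :: "nat \<Rightarrow> nat \<Rightarrow> int" and l k :: "nat \<Rightarrow> nat"
    and \<Gamma> :: "darc list" and j :: nat
  assumes "circular_matrix m n A l k"
    and "closed_path m n l k \<Gamma>"
    and "j \<in> {1..n}"
  shows "is_winding_number n k \<Gamma> (p_plus n l k \<Gamma> j - p_minus n l k \<Gamma> j)"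
proof -
  let ?pot = "cut_potential n j"
  have arcs: "\<And>e. e \<in> set \<Gamma> \<Longrightarrow> arc_len k e =
      ?pot (arc_head n l k e) - ?pot (arc_tail n l k e) + int n * signed_jump n l k j e"
    using assms arc_len_cut_potential unfolding closed_path_def by blast
  have "total_length k \<Gamma> =
      (\<Sum>e\<leftarrow>\<Gamma>. ?pot (arc_head n l k e) - ?pot (arc_tail n l k e)) + int n * (\<Sum>e\<leftarrow>\<Gamma>. signed_jump n l k j e)"
    unfolding total_length_def
    by (simp add: map_cong[OF refl arcs] sum_list_addf sum_list_const_mult)
  also have "(\<Sum>e\<leftarrow>\<Gamma>. ?pot (arc_head n l k e) - ?pot (arc_tail n l k e)) = 0"
    using assms(2) unfolding closed_path_def by (intro sum_list_cyclic_telescope) auto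
  finally show ?thesis
    unfolding is_winding_number_def p_plus_minus_signed_jump by (simp add: mult.commute)
qed

end
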